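(* Let $d\ge1$, $0<c\le\infty$, $X=(0,c)$, $X_{\mathrm{SYM}}=(-c,0)\cup(0,c)$, $\mathbb{X}=(X_{\mathrm{SYM}})^d$. For $i=1,\dots,d$ let $w_i\in C^2(X)$ be strictly positive, $p_i\in C^2(X)$ real-valued and nonvanishing, $q_i\in C^1(X)$ real-valued, $a_i\ge0$ constants, $\mu_i(dx)=w_i(x)dx$ on $X$, $\delta_i=p_i\frac{d}{dx}+q_i$, $\delta_i^*=-p_i\frac{d}{dx}+q_i-p_i\frac{w_i'}{w_i}-p_i'$, $L_i=a_i+\delta_i^*\delta_i$. Assume for each $i$ there is an orthonormal basis $\{\varphi^{(i)}_k:k\in\mathbb{N}\}$ of $L^2(X,\mu_i)$ with $\varphi^{(i)}_k\in C^\infty(X)$, $L_i\varphi^{(i)}_k=\lambda^{(i)}_k\varphi^{(i)}_k$, $\lambda^{(i)}_0<\lambda^{(i)}_1<\dots\to\infty$, $\delta_i\varphi^{(i)}_k\in L^2(X,\mu_i)$ and $\langle\delta_i\varphi^{(i)}_k,\delta_i\varphi^{(i)}_m\rangle_{\mu_i}=\langle\delta_i^*\delta_i\varphi^{(i)}_k,\varphi^{(i)}_m\rangle_{\mu_i}$ for all $k,m$; assume moreover $a_i=\lambda^{(i)}_0$ for every $i$. Extend $w_i,p_i,\varphi^{(i)}_k$ evenly and $q_i$ oddly to $X_{\mathrm{SYM}}$, define $\Phi^{(i)}_n=\frac1{\sqrt2}\varphi^{(i)}_{n/2}$ for even $n$, $\Phi^{(i)}_n=-\frac1{\sqrt2}(\lambda^{(i)}_{(n+1)/2}-a_i)^{-1/2}\delta_i\varphi^{(i)}_{(n+1)/2}$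 for odd $n$, $\Phi_n=\Phi^{(1)}_{n_1}\otimes\cdots\otimes\Phi^{(d)}_{n_d}$ for $n\in\mathbb{N}^d$, with the convention $\Phi_n\equiv0$ if $n\in\mathbb{Z}^d\setminus\mathbb{N}^d$, and $\langle n\rangle_j=\lfloor\frac{n_j+1}2\rfloor$. Let $$D_jf(x)=p_j(x_j)\partial_{x_j}f(x)+q_j(x_j)\tfrac{f(x)+f(\sigma_jx)}{2}+\Big[p_j(x_j)\tfrac{w_j'(x_j)}{w_j(x_j)}+p_j'(x_j)-q_j(x_j)\Big]\tfrac{f(x)-f(\sigma_jx)}{2}$$ ($\sigma_j$ the reflection changing the sign of the $j$th coordinate). Then for $j=1,\dots,d$, $N\ge1$ and $n\in\mathbb{N}^d$, $$D_j^N\Phi_n=\begin{cases}(-1)^{N/2}\big(\lambda^{(j)}_{\langle n\rangle_j}-a_j\big)^{N/2}\Phi_n,& N\text{ even},\\ (-1)^{n_j+1+(N-1)/2}\big(\lambda^{(j)}_{\langle n\rangle_j}-a_j\big)^{N/2}\Phi_{n-(-1)^{n_j}e_j},& N\text{ odd},\end{cases}$$ where $e_j$ is the $j$th coordinate vector.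
   Context: $\mathbb{N}=\{0,1,2,\dots\}$; $\lfloor\cdot\rfloor$ is the floor function. *)

theory Defs
  imports "HOL-Analysis.Analysis"
begin

definition Xset :: "ereal \<Rightarrow> real set" where
  "Xset c = {x. 0 < x \<and> ereal x < c}"

definition Xsym :: "ereal \<Rightarrow> real set" where
  "Xsym c = {x. x \<noteq> 0 \<and> ereal \<bar>x\<bar> < c}"

definition Ck_on :: "nat \<Rightarrow> real set \<Rightarrow> (real \<Rightarrow> real) \<Rightarrow> bool" where
  "Ck_on k S f \<longleftrightarrow>
     (\<forall>m<k. \<forall>x\<in>S. ((deriv ^^ m) f) field_differentiable (at x)) \<and>
     continuous_on S ((deriv ^^ k) f)"

definition smooth_on :: "real set \<Rightarrow> (real \<Rightarrow> real) \<Rightarrow> bool" where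
  "smooth_on S f \<longleftrightarrow> (\<forall>k. Ck_on k S f)"

text \<open>delta = p d/dx + q and its formal adjoint w.r.t. w(x)dx.\<close>
definition delta :: "(real \<Rightarrow> real) \<Rightarrow> (real \<Rightarrow> real) \<Rightarrow> (real \<Rightarrow> real) \<Rightarrow> real \<Rightarrow> real" where
  "delta p q f = (\<lambda>x. p x * deriv f x + q x * f x)"

definition delta_star ::
  "(real \<Rightarrow> real) \<Rightarrow> (real \<Rightarrow> real) \<Rightarrow> (real \<Rightarrow> real) \<Rightarrow> (real \<Rightarrow> real) \<Rightarrow> real \<Rightarrow> real" where
  "delta_star w p q g = (\<lambda>x. - p x * deriv g x + q x * g x
        - p x * (deriv w x / w x) * g x - deriv p x * g x)"

definition Lop :: "real \<Rightarrow> (real \<Rightarrow> real) \<Rightarrow> (real \<Rightarrow> real) \<Rightarrow> (real \<Rightarrow> real)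
     \<Rightarrow> (real \<Rightarrow> real) \<Rightarrow> real \<Rightarrow> real" where
  "Lop a w p q f = (\<lambda>x. a * f x + delta_star w p q (delta p q f) x)"

definition meas :: "ereal \<Rightarrow> (real \<Rightarrow> real) \<Rightarrow> real measure" where
  "meas c w = density lborel (\<lambda>x. ennreal (indicator (Xset c) x * w x))"

definition L2 :: "real measure \<Rightarrow> (real \<Rightarrow> real) \<Rightarrow> bool" where
  "L2 M f \<longleftrightarrow> f \<in> borel_measurable M \<and> integrable M (\<lambda>x. (f x)\<^sup>2)"

definition ip :: "real measure \<Rightarrow> (real \<Rightarrow> real) \<Rightarrow> (real \<Rightarrow> real) \<Rightarrow> real" where
  "ip M f g = (\<integral>x. f x * g x \<partial>M)"

definition ONB :: "real measure \<Rightarrow> (nat \<Rightarrow> real \<Rightarrow> real) \<Rightarrow> bool" where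
  "ONB M \<phi> \<longleftrightarrow> (\<forall>k. L2 M (\<phi> k)) \<and>
     (\<forall>k m. ip M (\<phi> k) (\<phi> m) = (if k = m then 1 else 0)) \<and>
     (\<forall>f. L2 M f \<and> (\<forall>k. ip M f (\<phi> k) = 0) \<longrightarrow> (AE x in M. f x = 0))"

definition even_ext :: "(real \<Rightarrow> real) \<Rightarrow> real \<Rightarrow> real" where
  "even_ext f = (\<lambda>x. f \<bar>x\<bar>)"

definition odd_ext :: "(real \<Rightarrow> real) \<Rightarrow> real \<Rightarrow> real" where
  "odd_ext f = (\<lambda>x. sgn x * f \<bar>x\<bar>)"

definition Phi1 :: "(nat \<Rightarrow> real) \<Rightarrow> real \<Rightarrow> (real \<Rightarrow> real) \<Rightarrow> (real \<Rightarrow> real)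
     \<Rightarrow> (nat \<Rightarrow> real \<Rightarrow> real) \<Rightarrow> nat \<Rightarrow> real \<Rightarrow> real" where
  "Phi1 lam a p q \<phi> n x =
     (if even n then (1 / sqrt 2) * even_ext (\<phi> (n div 2)) x
      else - (1 / sqrt 2) * (lam ((n + 1) div 2) - a) powr (-1/2)
             * delta (even_ext p) (odd_ext q) (even_ext (\<phi> ((n + 1) div 2))) x)"

definition Phi :: "('d::finite \<Rightarrow> nat \<Rightarrow> real) \<Rightarrow> ('d \<Rightarrow> real) \<Rightarrow> ('d \<Rightarrow> real \<Rightarrow> real)
     \<Rightarrow> ('d \<Rightarrow> real \<Rightarrow> real) \<Rightarrow> ('d \<Rightarrow> nat \<Rightarrow> real \<Rightarrow> real) \<Rightarrow> ('d \<Rightarrow> int)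
     \<Rightarrow> ('d \<Rightarrow> real) \<Rightarrow> real" where
  "Phi lam a p q \<phi> n x =
     (if \<forall>i. 0 \<le> n i
      then (\<Prod>i\<in>UNIV. Phi1 (lam i) (a i) (p i) (q i) (\<phi> i) (nat (n i)) (x i))
      else 0)"

definition sigma :: "'d \<Rightarrow> ('d \<Rightarrow> real) \<Rightarrow> 'd \<Rightarrow> real" where
  "sigma j x = x(j := - x j)"

definition partial :: "'d \<Rightarrow> (('d \<Rightarrow> real) \<Rightarrow> real) \<Rightarrow> ('d \<Rightarrow> real) \<Rightarrow> real" where
  "partial j f x = deriv (\<lambda>t. f (x(j := t))) (x j)"

definition Dop :: "'d \<Rightarrow> ('d \<Rightarrow> real \<Rightarrow> real) \<Rightarrow> ('d \<Rightarrow> real \<Rightarrow> real) \<Rightarrow> ('d \<Rightarrow> real \<Rightarrow> real)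
     \<Rightarrow> (('d \<Rightarrow> real) \<Rightarrow> real) \<Rightarrow> ('d \<Rightarrow> real) \<Rightarrow> real" where
  "Dop j w p q f x =
     (let pe = even_ext (p j); we = even_ext (w j); qo = odd_ext (q j); t = x j in
      pe t * partial j f x + qo t * (f x + f (sigma j x)) / 2
      + (pe t * (deriv we t / we t) + deriv pe t - qo t) * (f x - f (sigma j x)) / 2)"

end

theory Submission
  imports Defs
begin

(* On X_SYM the one-variable operator maps the even extension of phi_k to the odd extension
   of delta phi_k, and that in turn to -(lam_k - a) times the even extension of phi_k; the
   second identity is the eigenvalue equation L phi_k = lam_k phi_k. Through the normalisations
   of Phi1, D_j therefore multiplies Phi_n by +-sqrt(lam_k - a_j) and moves n_j between 2k and
   2k - 1, touching only the j-th tensor factor; iterating gives the formula. For n_j = 0 both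
   sides vanish: a_j = lam_0 makes ||delta phi_0||^2 = <delta* delta phi_0, phi_0> = 0, so the
   continuous function delta phi_0 is zero. *)

lemma open_Xset: "open (Xset c)"
  unfolding Xset_def by (intro open_Collect_conj open_Collect_less continuous_intros)

lemma open_Xsym: "open (Xsym c)"
  unfolding Xsym_def by (intro open_Collect_conj open_Collect_neq open_Collect_less continuous_intros)

lemma Xsym_imp_abs_in_Xset: "t \<in> Xsym c \<Longrightarrow> \<bar>t\<bar> \<in> Xset c"
  by (auto simp: Xsym_def Xset_def)

lemma Xsym_uminus: "t \<in> Xsym c \<Longrightarrow> -t \<in> Xsym c"
  by (auto simp: Xsym_def)

lemma Xsym_nonzero: "t \<in> Xsym c \<Longrightarrow> t \<noteq> 0"
  by (auto simp: Xsym_def)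

lemma Ck_on_field_differentiable:
  "Ck_on k S f \<Longrightarrow> m < k \<Longrightarrow> x \<in> S \<Longrightarrow> (deriv ^^ m) f field_differentiable at x"
  by (simp add: Ck_on_def)

lemma even_ext_has_field_derivative:
  assumes t: "t \<noteq> 0" and f: "(f has_field_derivative D) (at \<bar>t\<bar>)"
  shows "(even_ext f has_field_derivative sgn t * D) (at t)"
proof -
  have "sgn t * t = \<bar>t\<bar>" by (simp add: sgn_mult_abs abs_sgn)
  with f have "((\<lambda>s. f (sgn t * s)) has_field_derivative D * sgn t) (at t)"
    using DERIV_chain[of f D "\<lambda>s. sgn t * s" t "sgn t"] by (auto simp: o_def intro: derivative_eq_intros)
  then have "((\<lambda>s. f (sgn t * s)) has_field_derivative sgn t * D) (at t)"
    by (simp add: mult.commute)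
  then show ?thesis
  proof (rule has_field_derivative_transform_within_open[where S="{s. 0 < sgn t * s}"])
    show "open {s. 0 < sgn t * s}" by (intro open_Collect_less continuous_intros)
    show "t \<in> {s. 0 < sgn t * s}" using t by (simp add: sgn_real_def)
    show "\<And>s. s \<in> {s. 0 < sgn t * s} \<Longrightarrow> f (sgn t * s) = even_ext f s"
      by (auto simp: even_ext_def sgn_real_def split: if_splits)
  qed
qed

lemma odd_ext_has_field_derivative:
  assumes t: "t \<noteq> 0" and f: "(f has_field_derivative D) (at \<bar>t\<bar>)"
  shows "(odd_ext f has_field_derivative D) (at t)"
proof -
  have "((\<lambda>s. sgn t * even_ext f s) has_field_derivative sgn t * (sgn t * D)) (at t)"
    by (intro DERIV_cmult even_ext_has_field_derivative t f)
  moreover have "sgn t * (sgn t * D) = D"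
    using t by (simp add: sgn_real_def)
  ultimately have "((\<lambda>s. sgn t * even_ext f s) has_field_derivative D) (at t)"
    by metis
  then show ?thesis
  proof (rule has_field_derivative_transform_within_open[where S="{s. 0 < sgn t * s}"])
    show "open {s. 0 < sgn t * s}" by (intro open_Collect_less continuous_intros)
    show "t \<in> {s. 0 < sgn t * s}" using t by (simp add: sgn_real_def)
    show "\<And>s. s \<in> {s. 0 < sgn t * s} \<Longrightarrow> sgn t * even_ext f s = odd_ext f s"
      by (auto simp: even_ext_def odd_ext_def sgn_real_def split: if_splits)
  qed
qed

lemma deriv_even_ext:
  "t \<noteq> 0 \<Longrightarrow> f field_differentiable at \<bar>t\<bar> \<Longrightarrow> deriv (even_ext f) t = sgn t * deriv f \<bar>t\<bar>"
  by (intro DERIV_imp_deriv even_ext_has_field_derivative) (auto simp: DERIV_deriv_iff_field_differentiable)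

lemma even_ext_field_differentiable:
  "t \<noteq> 0 \<Longrightarrow> f field_differentiable at \<bar>t\<bar> \<Longrightarrow> even_ext f field_differentiable at t"
  using even_ext_has_field_derivative field_differentiable_def
    DERIV_deriv_iff_field_differentiable by metis

lemma meas_density_measurable:
  assumes "continuous_on (Xset c) w"
  shows "(\<lambda>x. ennreal (indicator (Xset c) x * w x)) \<in> borel_measurable lborel"
proof -
  have "(\<lambda>x. indicator (Xset c) x *\<^sub>R w x) \<in> borel_measurable borel"
    by (rule borel_measurable_continuous_on_indicator[OF _ assms]) (simp add: open_Xset borel_open)
  then show ?thesis by (simp add: measurable_compose[OF _ measurable_ennreal])
qed

lemma AE_meas_iff:
  assumes "continuous_on (Xset c) w" and "\<And>x. x \<in> Xset c \<Longrightarrow> w x > 0"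
  shows "(AE x in meas c w. P x) \<longleftrightarrow> (AE x in lborel. x \<in> Xset c \<longrightarrow> P x)"
  unfolding meas_def AE_density[OF meas_density_measurable[OF assms(1)]]
  using assms(2) by (intro AE_cong) (auto simp: indicator_def)

lemma continuous_on_AE_lborel_eq_0:
  fixes g :: "real \<Rightarrow> real"
  assumes S: "open S" and g: "continuous_on S g" and ae: "AE x in lborel. x \<in> S \<longrightarrow> g x = 0"
    and u: "u \<in> S"
  shows "g u = 0"
proof (rule ccontr)
  assume "g u \<noteq> 0"
  moreover have "open (S \<inter> g -` (- {0}))"
    by (rule continuous_open_preimage[OF g S]) auto
  ultimately obtain e where e: "e > 0" "ball u e \<subseteq> S \<inter> g -` (- {0})"
    using u open_contains_ball by (metis IntI vimage_eq ComplI singletonD)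
  from ae have "AE x in lborel. x \<notin> ball u e"
    by eventually_elim (use e in auto)
  then have "emeasure lborel (ball u e) = 0"
    by (subst (asm) AE_iff_measurable[of "ball u e"]) auto
  with e show False by (simp add: ball_eq_greaterThanLessThan)
qed

lemma ip_eq_0_if_vanishing_on_Xset:
  assumes "continuous_on (Xset c) w" and "\<And>x. x \<in> Xset c \<Longrightarrow> w x > 0"
    and "\<And>x. x \<in> Xset c \<Longrightarrow> h x = 0"
  shows "ip (meas c w) h f = 0"
  unfolding ip_def using assms by (intro integral_eq_zero_AE) (simp add: AE_meas_iff)

lemma L2_ip_self_eq_0_imp_eq_0:
  assumes w: "continuous_on (Xset c) w" "\<And>x. x \<in> Xset c \<Longrightarrow> w x > 0"
    and g: "continuous_on (Xset c) g" "L2 (meas c w) g" and "ip (meas c w) g g = 0"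
    and u: "u \<in> Xset c"
  shows "g u = 0"
proof -
  have "integral\<^sup>L (meas c w) (\<lambda>x. (g x)\<^sup>2) = 0"
    using assms(5) by (simp add: ip_def power2_eq_square)
  then have "AE x in meas c w. (g x)\<^sup>2 = 0"
    using g(2) by (simp add: L2_def integral_nonneg_eq_0_iff_AE)
  then have "AE x in lborel. x \<in> Xset c \<longrightarrow> g x = 0"
    by (simp add: AE_meas_iff[OF w])
  then show ?thesis
    by (rule continuous_on_AE_lborel_eq_0[OF open_Xset g(1) _ u])
qed

lemma delta_ground_state_eq_0:
  assumes w: "continuous_on (Xset c) w" "\<And>x. x \<in> Xset c \<Longrightarrow> w x > 0"
    and cont: "continuous_on (Xset c) (delta p q \<phi>)" and L2: "L2 (meas c w) (delta p q \<phi>)"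
    and adj: "ip (meas c w) (delta p q \<phi>) (delta p q \<phi>)
            = ip (meas c w) (delta_star w p q (delta p q \<phi>)) \<phi>"
    and ground: "\<And>x. x \<in> Xset c \<Longrightarrow> Lop a w p q \<phi> x = a * \<phi> x"
    and u: "u \<in> Xset c"
  shows "delta p q \<phi> u = 0"
proof (rule L2_ip_self_eq_0_imp_eq_0[OF w cont L2 _ u])
  have "\<And>x. x \<in> Xset c \<Longrightarrow> delta_star w p q (delta p q \<phi>) x = 0"
    using ground by (simp add: Lop_def)
  from ip_eq_0_if_vanishing_on_Xset[OF w this]
  show "ip (meas c w) (delta p q \<phi>) (delta p q \<phi>) = 0"
    by (simp add: adj)
qed

definition dunkl1 ::
    "(real \<Rightarrow> real) \<Rightarrow> (real \<Rightarrow> real) \<Rightarrow> (real \<Rightarrow> real) \<Rightarrow> (real \<Rightarrow> real) \<Rightarrow> real \<Rightarrow> real"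
  where
  "dunkl1 w p q g t = (let pe = even_ext p; we = even_ext w; qo = odd_ext q in
      pe t * deriv g t + qo t * (g t + g (-t)) / 2
      + (pe t * (deriv we t / we t) + deriv pe t - qo t) * (g t - g (-t)) / 2)"

lemma dunkl1_cmult:
  "g field_differentiable at t \<Longrightarrow> dunkl1 w p q (\<lambda>x. K * g x) t = K * dunkl1 w p q g t"
  by (simp add: dunkl1_def Let_def deriv_cmult algebra_simps add_divide_distrib diff_divide_distrib)

definition partner :: "nat \<Rightarrow> nat" where
  "partner m = (if even m then m - 1 else m + 1)"

lemma partner_partner [simp]: "partner (partner m) = m"
  by (auto simp: partner_def elim: evenE)

lemma partner_div2 [simp]: "Suc (partner m) div 2 = Suc m div 2"
  by (auto simp: partner_def elim: evenE)

(* 1 \<le> N is needed since 0 powr 0 = 0. *)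
lemma powr_half_nat: "0 \<le> (x::real) \<Longrightarrow> 1 \<le> N \<Longrightarrow> x powr (real N / 2) = sqrt x ^ N"
  by (cases "x = 0") (simp_all add: powr_half_sqrt_powr powr_realpow real_sqrt_power)

lemma powr_minus_half: "(x::real) > 0 \<Longrightarrow> x powr - (1/2) = 1 / sqrt x"
  using powr_minus_divide[of x "1/2"] by (simp add: powr_half_sqrt)

locale half_line_eigensystem =
  fixes c :: ereal and w p q :: "real \<Rightarrow> real" and \<phi> :: "nat \<Rightarrow> real \<Rightarrow> real"
    and lam :: "nat \<Rightarrow> real" and a :: real
  assumes w_differentiable: "\<And>x. x \<in> Xset c \<Longrightarrow> w field_differentiable at x"
    and p_differentiable: "\<And>x. x \<in> Xset c \<Longrightarrow> p field_differentiable at x"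
    and q_differentiable: "\<And>x. x \<in> Xset c \<Longrightarrow> q field_differentiable at x"
    and phi_differentiable: "\<And>k x. x \<in> Xset c \<Longrightarrow> \<phi> k field_differentiable at x"
    and deriv_phi_differentiable: "\<And>k x. x \<in> Xset c \<Longrightarrow> deriv (\<phi> k) field_differentiable at x"
    and eigen: "\<And>k x. x \<in> Xset c \<Longrightarrow> Lop a w p q (\<phi> k) x = lam k * \<phi> k x"
    and lam_strict_mono: "strict_mono lam"
    and lam_0: "lam 0 = a"
    and delta_phi_0: "\<And>x. x \<in> Xset c \<Longrightarrow> delta p q (\<phi> 0) x = 0"
begin

lemma lam_gt: "1 \<le> k \<Longrightarrow> a < lam k"
  using lam_strict_mono lam_0 by (metis gr0I strict_mono_less not_one_le_zero)

lemma delta_phi_differentiable: "u \<in> Xset c \<Longrightarrow> delta p q (\<phi> k) field_differentiable at u"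
  unfolding delta_def
  by (intro field_differentiable_add field_differentiable_mult p_differentiable q_differentiable
      phi_differentiable deriv_phi_differentiable)

abbreviation Dphi :: "nat \<Rightarrow> real \<Rightarrow> real" where
  "Dphi k \<equiv> delta (even_ext p) (odd_ext q) (even_ext (\<phi> k))"

lemma Dphi_eq_odd_ext: "t \<in> Xsym c \<Longrightarrow> Dphi k t = odd_ext (delta p q (\<phi> k)) t"
  using deriv_even_ext[OF Xsym_nonzero phi_differentiable[OF Xsym_imp_abs_in_Xset]]
  by (simp add: delta_def odd_ext_def even_ext_def algebra_simps)

lemma Dphi_has_field_derivative:
  assumes t: "t \<in> Xsym c"
  shows "(Dphi k has_field_derivative deriv (delta p q (\<phi> k)) \<bar>t\<bar>) (at t)"
proof -
  have "(odd_ext (delta p q (\<phi> k)) has_field_derivative deriv (delta p q (\<phi> k)) \<bar>t\<bar>) (at t)"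
    using t delta_phi_differentiable[OF Xsym_imp_abs_in_Xset[OF t]]
    by (intro odd_ext_has_field_derivative Xsym_nonzero) (simp_all add: DERIV_deriv_iff_field_differentiable)
  then show ?thesis
    by (rule has_field_derivative_transform_within_open[OF _ open_Xsym t]) (simp add: Dphi_eq_odd_ext)
qed

lemma dunkl1_even_ext_phi: "t \<in> Xsym c \<Longrightarrow> dunkl1 w p q (even_ext (\<phi> k)) t = Dphi k t"
  using deriv_even_ext[OF Xsym_nonzero phi_differentiable[OF Xsym_imp_abs_in_Xset]]
  by (simp add: dunkl1_def delta_def odd_ext_def even_ext_def algebra_simps)

lemma dunkl1_Dphi:
  assumes t: "t \<in> Xsym c"
  shows "dunkl1 w p q (Dphi k) t = - (lam k - a) * even_ext (\<phi> k) t"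
proof -
  define u where "u = \<bar>t\<bar>"
  define s where "s = sgn t"
  define g where "g = delta p q (\<phi> k) u"
  define r where "r = deriv w u / w u"
  have u: "u \<in> Xset c" using t by (simp add: u_def Xsym_imp_abs_in_Xset)
  have "deriv (Dphi k) t = deriv (delta p q (\<phi> k)) u"
    using Dphi_has_field_derivative[OF t] by (simp add: DERIV_imp_deriv u_def)
  moreover have "deriv (even_ext w) t = s * deriv w u" "deriv (even_ext p) t = s * deriv p u"
    using t u by (simp_all add: deriv_even_ext Xsym_nonzero w_differentiable p_differentiable u_def s_def)
  moreover have "Dphi k t = s * g" "Dphi k (-t) = - s * g"
    using Dphi_eq_odd_ext[OF t] Dphi_eq_odd_ext[OF Xsym_uminus[OF t]]
    by (simp_all add: odd_ext_def u_def s_def g_def)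
  ultimately have "dunkl1 w p q (Dphi k) t
      = p u * deriv (delta p q (\<phi> k)) u + (s * s) * ((p u * r + deriv p u - q u) * g)"
    by (simp add: dunkl1_def Let_def even_ext_def odd_ext_def u_def[symmetric] s_def[symmetric]
        r_def algebra_simps add_divide_distrib diff_divide_distrib)
  moreover have "s * s = 1" using Xsym_nonzero[OF t] by (simp add: s_def sgn_real_def)
  moreover have "a * \<phi> k u + delta_star w p q (delta p q (\<phi> k)) u = lam k * \<phi> k u"
    using eigen[OF u, of k] by (simp add: Lop_def)
  ultimately show ?thesis
    by (simp add: delta_star_def even_ext_def u_def[symmetric] g_def r_def algebra_simps)
qed

abbreviation mode :: "nat \<Rightarrow> real \<Rightarrow> real" where
  "mode \<equiv> Phi1 lam a p q \<phi>"

lemma mode_even: "even m \<Longrightarrow> mode m = (\<lambda>x. 1 / sqrt 2 * even_ext (\<phi> (m div 2)) x)"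
  by (rule ext) (simp add: Phi1_def)

lemma mode_odd: "odd m \<Longrightarrow>
    mode m = (\<lambda>x. - (1 / sqrt 2) * (lam ((m + 1) div 2) - a) powr (-1/2) * Dphi ((m + 1) div 2) x)"
  by (rule ext) (simp add: Phi1_def)

lemma mode_field_differentiable:
  assumes t: "t \<in> Xsym c"
  shows "mode m field_differentiable at t"
proof (cases "even m")
  case True
  show ?thesis
    unfolding mode_even[OF True] using t
    by (intro field_differentiable_mult field_differentiable_const even_ext_field_differentiable
        Xsym_nonzero phi_differentiable Xsym_imp_abs_in_Xset)
next
  case False
  have "Dphi ((m + 1) div 2) field_differentiable at t"
    using Dphi_has_field_derivative[OF t] field_differentiable_def by blast
  then show ?thesis
    unfolding mode_odd[OF False] by (intro field_differentiable_mult field_differentiable_const)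
qed

lemma dunkl1_mode:
  assumes t: "t \<in> Xsym c"
  shows "dunkl1 w p q (mode m) t = (-1) ^ (m + 1) * sqrt (lam ((m + 1) div 2) - a) * mode (partner m) t"
proof -
  define k where "k = (m + 1) div 2"
  consider "m = 0" | "even m" "m \<noteq> 0" | "odd m" by blast
  then show ?thesis
  proof cases
    case 1
    have "dunkl1 w p q (mode m) t = 1 / sqrt 2 * Dphi 0 t"
      unfolding 1 mode_even[OF even_zero] using t
      by (subst dunkl1_cmult) (simp_all add: even_ext_field_differentiable Xsym_nonzero
          phi_differentiable Xsym_imp_abs_in_Xset dunkl1_even_ext_phi)
    with 1 Dphi_eq_odd_ext[OF t] delta_phi_0[OF Xsym_imp_abs_in_Xset[OF t]] show ?thesis
      by (simp add: odd_ext_def lam_0)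
  next
    case 2
    have "dunkl1 w p q (mode m) t = 1 / sqrt 2 * Dphi k t"
      unfolding mode_even[OF 2(1)] using t 2
      by (subst dunkl1_cmult) (auto simp: even_ext_field_differentiable Xsym_nonzero
          phi_differentiable Xsym_imp_abs_in_Xset dunkl1_even_ext_phi k_def elim: evenE)
    moreover have "1 \<le> k" "m div 2 = k" "odd (partner m)" "(partner m + 1) div 2 = k"
      using 2 by (auto simp: k_def partner_def elim: evenE)
    ultimately show ?thesis
      using 2 lam_gt[of k] by (simp add: mode_odd k_def[symmetric] powr_minus_half)
  next
    case 3
    have pos: "0 < lam k - a" and partner: "even (partner m)" "partner m div 2 = k"
      using 3 lam_gt[of k] by (auto simp: k_def partner_def elim: oddE)
    have "Dphi k field_differentiable at t"
      using Dphi_has_field_derivative[OF t] field_differentiable_def by blast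
    then have "dunkl1 w p q (mode m) t
        = - (1 / sqrt 2) * (lam k - a) powr (-1/2) * (- (lam k - a) * even_ext (\<phi> k) t)"
      unfolding mode_odd[OF 3] k_def[symmetric] by (subst dunkl1_cmult) (simp_all add: dunkl1_Dphi[OF t])
    also have "\<dots> = (lam k - a) / sqrt (lam k - a) * (1 / sqrt 2 * even_ext (\<phi> k) t)"
      using pos by (simp add: powr_minus_half field_simps)
    also have "\<dots> = sqrt (lam k - a) * mode (partner m) t"
      using pos partner by (simp add: real_div_sqrt mode_even)
    finally show ?thesis
      using 3 by (simp add: k_def)
  qed
qed

(* At m = 0 the truncated partner 0 = 0 breaks the parity flip, but there the gap vanishes. *)
lemma sqrt_gap_partner_sign:
  "(-1) ^ (partner m + 1) * sqrt (lam ((m + 1) div 2) - a) = (-1) ^ m * sqrt (lam ((m + 1) div 2) - a)"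
  by (cases "m = 0") (auto simp: partner_def lam_0 elim: evenE oddE)

end

lemma deriv_local:
  assumes "open S" "x \<in> S" "\<And>y. y \<in> S \<Longrightarrow> f y = g y"
  shows "deriv f x = deriv g x"
  using assms has_field_derivative_transform_within_open unfolding deriv_def by metis

lemma Dop_tensor:
  fixes F R :: "('d::finite \<Rightarrow> real) \<Rightarrow> real"
  assumes F: "\<And>y. F y = g (y j) * R y" and R: "\<And>y t. R (y(j := t)) = R y"
    and g: "g field_differentiable at (x j)"
  shows "Dop j w p q F x = dunkl1 (w j) (p j) (q j) g (x j) * R x"
proof -
  have "partial j F x = deriv g (x j) * R x"
    unfolding partial_def F R fun_upd_same using g by (rule deriv_cmult_right)
  moreover have "F (sigma j x) = g (- x j) * R x"
    unfolding F sigma_def R by simp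
  ultimately show ?thesis
    unfolding Dop_def dunkl1_def Let_def F[of x] by (simp add: algebra_simps)
qed

lemma Dop_cong_Xsym:
  fixes F H :: "('d::finite \<Rightarrow> real) \<Rightarrow> real"
  assumes FH: "\<And>y. (\<forall>i. y i \<in> Xsym c) \<Longrightarrow> F y = H y" and x: "\<forall>i. x i \<in> Xsym c"
  shows "Dop j w p q F x = Dop j w p q H x"
proof -
  have "partial j F x = partial j H x"
    unfolding partial_def
  proof (rule deriv_local[OF open_Xsym])
    show "x j \<in> Xsym c" using x by simp
    fix t assume "t \<in> Xsym c"
    then show "F (x(j := t)) = H (x(j := t))" using x by (intro FH) auto
  qed
  moreover have "F x = H x" "F (sigma j x) = H (sigma j x)"
    using x by (auto intro!: FH simp: sigma_def Xsym_uminus)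
  ultimately show ?thesis unfolding Dop_def by simp
qed

lemma half_line_eigensystemI:
  assumes "Ck_on 2 (Xset c) w" "\<And>x. x \<in> Xset c \<Longrightarrow> w x > 0"
    and "Ck_on 2 (Xset c) p" "Ck_on 1 (Xset c) q" "\<And>k. smooth_on (Xset c) (\<phi> k)"
    and eigen: "\<And>k x. x \<in> Xset c \<Longrightarrow> Lop a w p q (\<phi> k) x = lam k * \<phi> k x"
    and "strict_mono lam" "lam 0 = a"
    and "L2 (meas c w) (delta p q (\<phi> 0))"
    and "ip (meas c w) (delta p q (\<phi> 0)) (delta p q (\<phi> 0))
       = ip (meas c w) (delta_star w p q (delta p q (\<phi> 0))) (\<phi> 0)"
  shows "half_line_eigensystem c w p q \<phi> lam a"
proof -
  have diff: "\<And>x. x \<in> Xset c \<Longrightarrow> w field_differentiable at x"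
      "\<And>x. x \<in> Xset c \<Longrightarrow> p field_differentiable at x"
      "\<And>x. x \<in> Xset c \<Longrightarrow> q field_differentiable at x"
      "\<And>k x. x \<in> Xset c \<Longrightarrow> \<phi> k field_differentiable at x"
      "\<And>k x. x \<in> Xset c \<Longrightarrow> deriv (\<phi> k) field_differentiable at x"
    using assms(1,3,4,5) Ck_on_field_differentiable[of 2 "Xset c" _ 0]
      Ck_on_field_differentiable[of 1 "Xset c" _ 0] Ck_on_field_differentiable[of 2 "Xset c" _ 1]
    by (auto simp: smooth_on_def)
  have cont: "continuous_on (Xset c) w" "continuous_on (Xset c) (delta p q (\<phi> 0))"
    unfolding delta_def using diff
    by (auto intro!: continuous_at_imp_continuous_on field_differentiable_imp_continuous_at
        field_differentiable_add field_differentiable_mult)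
  have "\<And>x. x \<in> Xset c \<Longrightarrow> delta p q (\<phi> 0) x = 0"
    by (rule delta_ground_state_eq_0[OF cont(1) assms(2) cont(2) assms(9,10)])
      (use eigen[of _ 0] assms(8) in simp_all)
  with diff assms show ?thesis
    by unfold_locales auto
qed

locale tensor_eigensystem =
  J: half_line_eigensystem c "w j" "p j" "q j" "\<phi> j" "lam j" "a j"
  for c w p q \<phi> lam a and j :: "'d::finite"
begin

abbreviation Phi_nat :: "('d \<Rightarrow> nat) \<Rightarrow> ('d \<Rightarrow> real) \<Rightarrow> real" where
  "Phi_nat n \<equiv> Phi lam a p q \<phi> (\<lambda>i. int (n i))"

abbreviation sqrt_gap :: "('d \<Rightarrow> nat) \<Rightarrow> real" where
  "sqrt_gap n \<equiv> sqrt (lam j ((n j + 1) div 2) - a j)"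

lemma Phi_nat_split:
  "Phi_nat n y
    = J.mode (n j) (y j) * (\<Prod>i\<in>UNIV - {j}. Phi1 (lam i) (a i) (p i) (q i) (\<phi> i) (n i) (y i))"
  unfolding Phi_def by (simp add: prod.remove[of UNIV j])

lemma Dop_Phi_nat:
  assumes x: "\<forall>i. x i \<in> Xsym c"
  shows "Dop j w p q (\<lambda>y. C * Phi_nat n y) x
    = C * ((-1) ^ (n j + 1) * sqrt_gap n * Phi_nat (n(j := partner (n j))) x)"
proof -
  let ?R = "\<lambda>n y. \<Prod>i\<in>UNIV - {j}. Phi1 (lam i) (a i) (p i) (q i) (\<phi> i) (n i) (y i)"
  have "Dop j w p q (\<lambda>y. C * Phi_nat n y) x = dunkl1 (w j) (p j) (q j) (J.mode (n j)) (x j) * (C * ?R n x)"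
    using x by (intro Dop_tensor) (auto simp: Phi_nat_split J.mode_field_differentiable intro!: prod.cong)
  also have "?R n x = ?R (n(j := partner (n j))) x"
    by (intro prod.cong) auto
  finally show ?thesis
    using x by (simp add: J.dunkl1_mode Phi_nat_split)
qed

lemma funpow_Dop_Phi_nat:
  "\<forall>x. (\<forall>i. x i \<in> Xsym c) \<longrightarrow> (Dop j w p q ^^ N) (Phi_nat n) x =
     (if even N then (-1) ^ (N div 2) * sqrt_gap n ^ N * Phi_nat n x
      else (-1) ^ (n j + 1 + (N - 1) div 2) * sqrt_gap n ^ N * Phi_nat (n(j := partner (n j))) x)"
proof (induction N)
  case 0
  then show ?case by simp
next
  case (Suc N)
  show ?case
  proof (intro allI impI)
    fix x :: "'d \<Rightarrow> real" assume x: "\<forall>i. x i \<in> Xsym c"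
    define n' where "n' = n(j := partner (n j))"
    have partner_n': "n'(j := partner (n' j)) = n" "sqrt_gap n' = sqrt_gap n"
      "(-1) ^ (n' j + 1) * sqrt_gap n = (-1) ^ n j * sqrt_gap n"
      using J.sqrt_gap_partner_sign[of "n j"] by (simp_all add: n'_def)
    show "(Dop j w p q ^^ Suc N) (Phi_nat n) x =
      (if even (Suc N) then (-1) ^ (Suc N div 2) * sqrt_gap n ^ Suc N * Phi_nat n x
       else (-1) ^ (n j + 1 + (Suc N - 1) div 2) * sqrt_gap n ^ Suc N * Phi_nat n' x)"
    proof (cases "even N")
      case True
      have "(Dop j w p q ^^ Suc N) (Phi_nat n) x
          = Dop j w p q (\<lambda>y. ((-1) ^ (N div 2) * sqrt_gap n ^ N) * Phi_nat n y) x"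
        unfolding funpow.simps o_def
        by (rule Dop_cong_Xsym[OF _ x]) (use Suc.IH True in simp)
      also have "\<dots> = (-1) ^ (N div 2) * sqrt_gap n ^ N * ((-1) ^ (n j + 1) * sqrt_gap n * Phi_nat n' x)"
        unfolding n'_def by (rule Dop_Phi_nat[OF x])
      finally show ?thesis
        using True by (simp add: power_add mult_ac)
    next
      case False
      have "(Dop j w p q ^^ Suc N) (Phi_nat n) x
          = Dop j w p q (\<lambda>y. ((-1) ^ (n j + 1 + (N - 1) div 2) * sqrt_gap n ^ N) * Phi_nat n' y) x"
        unfolding funpow.simps o_def
        by (rule Dop_cong_Xsym[OF _ x]) (use Suc.IH False in \<open>simp add: n'_def\<close>)
      also have "\<dots> = (-1) ^ (n j + 1 + (N - 1) div 2) * sqrt_gap n ^ N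
          * ((-1) ^ (n' j + 1) * sqrt_gap n * Phi_nat n x)"
        by (rule Dop_Phi_nat[OF x, of _ n', unfolded partner_n'(1,2)])
      also have "\<dots> = (-1) ^ (n j + n j + 1 + (N - 1) div 2) * sqrt_gap n ^ Suc N * Phi_nat n x"
        using partner_n'(3) by (simp add: power_add mult_ac)
      finally show ?thesis
        using False by (auto simp: power_add elim!: oddE)
    qed
  qed
qed

lemma funpow_Dop_Phi:
  assumes "1 \<le> N"
  shows "\<forall>x. (\<forall>i. x i \<in> Xsym c) \<longrightarrow>
     ((Dop j w p q ^^ N) (Phi lam a p q \<phi> (\<lambda>i. int (n i))) x =
      (if even N
       then (-1) ^ (N div 2) * (lam j ((n j + 1) div 2) - a j) powr (real N / 2)
              * Phi lam a p q \<phi> (\<lambda>i. int (n i)) x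
       else (-1) ^ (n j + 1 + (N - 1) div 2) * (lam j ((n j + 1) div 2) - a j) powr (real N / 2)
              * Phi lam a p q \<phi> (\<lambda>i. int (n i) - (if i = j then (-1) ^ (n j) else 0)) x))"
proof -
  have "0 \<le> lam j ((n j + 1) div 2) - a j"
    using J.lam_0 J.lam_gt[of "(n j + 1) div 2"] by (cases "(n j + 1) div 2") auto
  then have powr: "(lam j ((n j + 1) div 2) - a j) powr (real N / 2) = sqrt_gap n ^ N"
    using assms by (rule powr_half_nat)
  show ?thesis
  proof (cases "n j = 0")
    case True
    then show ?thesis
      using funpow_Dop_Phi_nat[of N n] assms by (simp add: powr J.lam_0)
  next
    case False
    then have "(\<lambda>i. int (n i) - (if i = j then (-1) ^ (n j) else 0))
        = (\<lambda>i. int ((n(j := partner (n j))) i))"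
      by (auto simp: partner_def of_nat_diff)
    then show ?thesis
      using funpow_Dop_Phi_nat[of N n] by (simp only: powr)
  qed
qed

end

theorem mainTheorem5:
  fixes c :: ereal
    and w p q :: "'d::finite \<Rightarrow> real \<Rightarrow> real"
    and a :: "'d \<Rightarrow> real"
    and \<phi> :: "'d \<Rightarrow> nat \<Rightarrow> real \<Rightarrow> real"
    and lam :: "'d \<Rightarrow> nat \<Rightarrow> real"
    and j :: 'd and N :: nat and n :: "'d \<Rightarrow> nat"
  assumes c_pos: "0 < c"
    and w_C2: "\<And>i. Ck_on 2 (Xset c) (w i)"
    and w_pos: "\<And>i x. x \<in> Xset c \<Longrightarrow> w i x > 0"
    and p_C2: "\<And>i. Ck_on 2 (Xset c) (p i)"
    and p_nz: "\<And>i x. x \<in> Xset c \<Longrightarrow> p i x \<noteq> 0"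
    and q_C1: "\<And>i. Ck_on 1 (Xset c) (q i)"
    and a_nonneg: "\<And>i. a i \<ge> 0"
    and onb: "\<And>i. ONB (meas c (w i)) (\<phi> i)"
    and phi_smooth: "\<And>i k. smooth_on (Xset c) (\<phi> i k)"
    and eigen: "\<And>i k x. x \<in> Xset c \<Longrightarrow>
                   Lop (a i) (w i) (p i) (q i) (\<phi> i k) x = lam i k * \<phi> i k x"
    and lam_mono: "\<And>i. strict_mono (lam i)"
    and lam_inf: "\<And>i. filterlim (lam i) at_top sequentially"
    and delta_L2: "\<And>i k. L2 (meas c (w i)) (delta (p i) (q i) (\<phi> i k))"
    and delta_adj: "\<And>i k m.
          ip (meas c (w i)) (delta (p i) (q i) (\<phi> i k)) (delta (p i) (q i) (\<phi> i m))
        = ip (meas c (w i)) (delta_star (w i) (p i) (q i) (delta (p i) (q i) (\<phi> i k))) (\<phi> i m)"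
    and a_eq: "\<And>i. a i = lam i 0"
    and N_pos: "N \<ge> 1"
  shows "\<forall>x. (\<forall>i. x i \<in> Xsym c) \<longrightarrow>
     ((Dop j w p q ^^ N) (Phi lam a p q \<phi> (\<lambda>i. int (n i))) x =
      (if even N
       then (-1) ^ (N div 2) * (lam j ((n j + 1) div 2) - a j) powr (real N / 2)
              * Phi lam a p q \<phi> (\<lambda>i. int (n i)) x
       else (-1) ^ (n j + 1 + (N - 1) div 2) * (lam j ((n j + 1) div 2) - a j) powr (real N / 2)
              * Phi lam a p q \<phi> (\<lambda>i. int (n i) - (if i = j then (-1) ^ (n j) else 0)) x))"
proof -
  interpret tensor_eigensystem c w p q \<phi> lam a j
    unfolding tensor_eigensystem_def
    by (rule half_line_eigensystemI) (use assms in auto)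
  show ?thesis
    using N_pos by (rule funpow_Dop_Phi)
qed

end
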